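(* Consider the closed-loop system $$\dot X(t)=f\big(X(t),u(0,t)\big),\quad u_t(x,t)=v\big(u(x,t)\big)u_x(x,t),\quad u(1,t)=\kappa\big(p(1,t)\big),$$ with $p(x,t)=X(t)+\int_0^x f(p(y,t),u(y,t))\Gamma(u(y,t),u_y(y,t),y)\,dy$, $\Gamma(u,u_x,x)=\frac{1}{v(u)}-\frac{x v'(u)u_x}{v(u)^2}$, under Assumptions (A1)–(A3) below, let $M>0$ be fixed, and define $w(x,t)=u(x,t)-\kappa(p(x,t))$. There exists a class $\mathcal{K}_\infty$ function $\rho_2$ such that for all solutions of the closed-loop system satisfying $$-M<\frac{v'\big(u(x,t)\big)u_x(x,t)}{v\big(u(x,t)\big)}<1\quad\text{for all }x\in[0,1],\ t\ge0,$$ the following holds: $$\|p(t)\|_\infty+\|p_x(t)\|_\infty\le\rho_2\big(|X(t)|+\|w(t)\|_\infty\big)\quad\text{for all }t\ge0.$$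
   Context: $X(t)\in\mathbb{R}^n$, $u(x,t)\in\mathbb{R}$, $x\in[0,1]$, $t\ge0$; $f:\mathbb{R}^n\times\mathbb{R}\to\mathbb{R}^n$ is continuously differentiable with $f(0,0)=0$. (A1) $v:\mathbb{R}\to\mathbb{R}_+$ is twice continuously differentiable and $v(u)\ge\underline v>0$ for all $u$. (A2) $\dot X=f(X,\omega)$ is strongly forward complete w.r.t. $\omega$: there exist smooth $R:\mathbb{R}^n\to\mathbb{R}_+$ and class $\mathcal{K}_\infty$ functions $\alpha_1,\alpha_2,\alpha_3$ with $\alpha_1(|X|)\le R(X)\le\alpha_2(|X|)$, $\frac{\partial R}{\partial X}f(X,\omega)\le R(X)+\alpha_3(|\omega|)$. (A3) $\kappa:\mathbb{R}^n\to\mathbb{R}$ is twice continuously differentiable, $\kappa(0)=0$, and $\dot X=f(X,\kappa(X)+\omega)$ is input-to-state stable w.r.t. $\omega$. Solutions are continuously differentiable functions $X$, $u$ satisfying the closed-loop equations. For vector-valued $p$, $\|p(t)\|_\infty=\max_{x\in[0,1]}|p(x,t)|$, $\|p_x(t)\|_\infty=\max_{x\in[0,1]}|p_x(x,t)|$ ($|\cdot|$ Euclidean); $\|w(t)\|_\infty=\max_{x\in[0,1]}|w(x,t)|$. *)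

theory Defs
  imports "HOL-Analysis.Analysis"
begin

definition class_K :: "(real \<Rightarrow> real) \<Rightarrow> bool" where
  "class_K \<alpha> \<longleftrightarrow> continuous_on {0..} \<alpha> \<and> \<alpha> 0 = 0 \<and> strict_mono_on {0..} \<alpha>"

definition class_K_inf :: "(real \<Rightarrow> real) \<Rightarrow> bool" where
  "class_K_inf \<alpha> \<longleftrightarrow> class_K \<alpha> \<and> filterlim \<alpha> at_top at_top"

definition class_KL :: "(real \<Rightarrow> real \<Rightarrow> real) \<Rightarrow> bool" where
  "class_KL \<beta> \<longleftrightarrow>
     (\<forall>t\<ge>0. class_K (\<lambda>s. \<beta> s t)) \<and>
     (\<forall>s\<ge>0. antimono_on {0..} (\<beta> s) \<and> ((\<beta> s) \<longlongrightarrow> 0) at_top)"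

text \<open>Smooth (C-infinity) real-valued functions: differentiable everywhere, and every
  directional derivative is again smooth (greatest fixed point).\<close>

coinductive smooth_fun :: "('a::euclidean_space \<Rightarrow> real) \<Rightarrow> bool" where
  "(\<forall>x. g differentiable (at x)) \<Longrightarrow>
   (\<forall>d. smooth_fun (\<lambda>x. frechet_derivative g (at x) d)) \<Longrightarrow> smooth_fun g"

definition strongly_forward_complete :: "('a::euclidean_space \<Rightarrow> real \<Rightarrow> 'a) \<Rightarrow> bool" where
  "strongly_forward_complete f \<longleftrightarrow>
     (\<exists>R \<alpha>1 \<alpha>2 \<alpha>3. smooth_fun R \<and> (\<forall>X. R X \<ge> 0) \<and>
        class_K_inf \<alpha>1 \<and> class_K_inf \<alpha>2 \<and> class_K_inf \<alpha>3 \<and>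
        (\<forall>X. \<alpha>1 (norm X) \<le> R X \<and> R X \<le> \<alpha>2 (norm X)) \<and>
        (\<forall>X \<omega>. frechet_derivative R (at X) (f X \<omega>) \<le> R X + \<alpha>3 \<bar>\<omega>\<bar>))"

text \<open>(A3): input-to-state stability of dX/dt = F(X,omega) w.r.t. omega
  (inputs: continuous functions on [0,oo); solutions: classical).  ISS includes
  existence of solutions on [0,oo) for every initial state and input.\<close>

definition ode_solution :: "('a::euclidean_space \<Rightarrow> real \<Rightarrow> 'a) \<Rightarrow> (real \<Rightarrow> real) \<Rightarrow> (real \<Rightarrow> 'a) \<Rightarrow> bool" where
  "ode_solution F \<omega> X \<longleftrightarrow>
     (\<forall>t\<ge>0. (X has_vector_derivative F (X t) (\<omega> t)) (at t within {0..}))"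

definition ISS :: "('a::euclidean_space \<Rightarrow> real \<Rightarrow> 'a) \<Rightarrow> bool" where
  "ISS F \<longleftrightarrow>
     (\<forall>x0 \<omega>. continuous_on {0..} \<omega> \<longrightarrow> (\<exists>X. ode_solution F \<omega> X \<and> X 0 = x0)) \<and>
     (\<exists>\<beta> \<gamma>. class_KL \<beta> \<and> class_K \<gamma> \<and>
        (\<forall>\<omega> X. continuous_on {0..} \<omega> \<longrightarrow> ode_solution F \<omega> X \<longrightarrow>
           (\<forall>t\<ge>0. norm (X t) \<le> \<beta> (norm (X 0)) t + \<gamma> (SUP s\<in>{0..t}. \<bar>\<omega> s\<bar>))))"

definition Gamma :: "(real \<Rightarrow> real) \<Rightarrow> (real \<Rightarrow> real) \<Rightarrow> real \<Rightarrow> real \<Rightarrow> real \<Rightarrow> real" where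
  "Gamma v v' u ux x = 1 / v u - x * v' u * ux / (v u)\<^sup>2"

definition closed_loop_solution ::
  "('a::euclidean_space \<Rightarrow> real \<Rightarrow> 'a) \<Rightarrow> (real \<Rightarrow> real) \<Rightarrow> (real \<Rightarrow> real) \<Rightarrow> ('a \<Rightarrow> real)
   \<Rightarrow> (real \<Rightarrow> 'a) \<Rightarrow> (real \<Rightarrow> real \<Rightarrow> real) \<Rightarrow> (real \<Rightarrow> real \<Rightarrow> real) \<Rightarrow> (real \<Rightarrow> real \<Rightarrow> real)
   \<Rightarrow> (real \<Rightarrow> real \<Rightarrow> 'a) \<Rightarrow> bool" where
  "closed_loop_solution f v v' \<kappa> X u ux ut p \<longleftrightarrow>
     (\<forall>x\<in>{0..1}. \<forall>t\<ge>0.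
        ((\<lambda>(y,s). u y s) has_derivative (\<lambda>(h,k). ux x t * h + ut x t * k))
          (at (x,t) within {0..1} \<times> {0..})) \<and>
     continuous_on ({0..1} \<times> {0..}) (\<lambda>(y,s). ux y s) \<and>
     continuous_on ({0..1} \<times> {0..}) (\<lambda>(y,s). ut y s) \<and>
     (\<forall>t\<ge>0. (X has_vector_derivative f (X t) (u 0 t)) (at t within {0..})) \<and>
     (\<forall>x\<in>{0..1}. \<forall>t\<ge>0. ut x t = v (u x t) * ux x t) \<and>
     (\<forall>t\<ge>0. u 1 t = \<kappa> (p 1 t)) \<and>
     (\<forall>t\<ge>0. continuous_on {0..1} (\<lambda>y. p y t)) \<and>
     (\<forall>x\<in>{0..1}. \<forall>t\<ge>0.
        p x t = X t + integral {0..x}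
                  (\<lambda>y. Gamma v v' (u y t) (ux y t) y *\<^sub>R f (p y t) (u y t)))"

end

theory Submission
  imports Defs
begin

(* By the integral equation, the slice x \<mapsto> p(x,t) satisfies
   p_x = \<Gamma> f(p, \<kappa>(p) + w), and the bounds -M < v'(u) u_x / v(u) < 1 make \<Gamma> positive and at most
   (1 + M) / v_low. Reparametrising [0,1] by s = \<integral>\<^sub>0\<^sup>x \<Gamma> turns the slice into a trajectory of the
   ISS system dX/ds = f(X, \<kappa>(X) + \<omega>) with input w, starting at p(0,t) = X(t); continued with
   constant input beyond the end of the slice it is a solution on [0,\<infinity>), so the ISS estimate
   gives \<parallel>p(t)\<parallel> \<le> \<beta>(|X(t)|, 0) + \<gamma>(\<parallel>w(t)\<parallel>). The bound on p_x then follows from p_x = \<Gamma> f and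
   class K\<^sub>\<infinity> majorants of f and \<kappa>. *)

lemma class_K_mono: "class_K \<alpha> \<Longrightarrow> 0 \<le> a \<Longrightarrow> a \<le> b \<Longrightarrow> \<alpha> a \<le> \<alpha> b"
  unfolding class_K_def by (metis atLeast_iff order.trans order_le_less strict_mono_onD)

lemma class_K_nonneg: "class_K \<alpha> \<Longrightarrow> 0 \<le> a \<Longrightarrow> 0 \<le> \<alpha> a"
  using class_K_mono[of \<alpha> 0 a] by (simp add: class_K_def)

lemma class_K_mono_on:
  assumes "class_K \<alpha>"
  shows "mono_on {0..} \<alpha>"
proof (rule mono_onI)
  fix r s :: real assume "r \<in> {0..}" "r \<le> s"
  then show "\<alpha> r \<le> \<alpha> s" using class_K_mono[OF assms] by simp
qed

lemma class_K_id: "class_K (\<lambda>r. r)"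
  unfolding class_K_def by (auto intro: strict_mono_onI continuous_intros)

lemma class_K_add:
  assumes "class_K \<alpha>" "class_K \<beta>"
  shows "class_K (\<lambda>r. \<alpha> r + \<beta> r)"
  using assms unfolding class_K_def
  by (auto intro!: continuous_intros strict_mono_onI add_strict_mono dest: strict_mono_onD)

lemma class_K_scale:
  assumes "class_K \<alpha>" "c > 0"
  shows "class_K (\<lambda>r. c * \<alpha> r)"
  using assms unfolding class_K_def
  by (auto intro!: continuous_intros strict_mono_onI simp: strict_mono_onD)

lemma class_K_comp:
  assumes \<alpha>: "class_K \<alpha>" and \<beta>: "class_K \<beta>"
  shows "class_K (\<lambda>r. \<alpha> (\<beta> r))"
  unfolding class_K_def
proof (intro conjI)
  have \<beta>0: "\<beta> ` {0..} \<subseteq> {0..}" using class_K_nonneg[OF \<beta>] by auto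
  show "continuous_on {0..} (\<lambda>r. \<alpha> (\<beta> r))"
    by (rule continuous_on_compose2[OF _ _ \<beta>0]) (use \<alpha> \<beta> in \<open>simp_all add: class_K_def\<close>)
  show "strict_mono_on {0..} (\<lambda>r. \<alpha> (\<beta> r))"
  proof (rule strict_mono_onI)
    fix r s :: real assume rs: "r \<in> {0..}" "s \<in> {0..}" "r < s"
    have "\<beta> r < \<beta> s" using \<beta> rs unfolding class_K_def by (meson strict_mono_onD)
    moreover have "0 \<le> \<beta> r" "0 \<le> \<beta> s" using class_K_nonneg[OF \<beta>] rs by auto
    ultimately show "\<alpha> (\<beta> r) < \<alpha> (\<beta> s)"
      using \<alpha> unfolding class_K_def by (meson strict_mono_onD atLeast_iff)
  qed
qed (use assms in \<open>simp add: class_K_def\<close>)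

lemma class_K_inf_add_id:
  assumes "continuous_on {0..} g" "g 0 = 0" "mono_on {0..} g"
  shows "class_K_inf (\<lambda>r. g r + r)"
  unfolding class_K_inf_def class_K_def
proof (intro conjI)
  show "continuous_on {0..} (\<lambda>r. g r + r)" using assms(1) by (intro continuous_intros)
  show "strict_mono_on {0..} (\<lambda>r. g r + r)"
  proof (rule strict_mono_onI)
    fix r s :: real assume "r \<in> {0..}" "s \<in> {0..}" "r < s"
    then show "g r + r < g s + s" using mono_onD[OF assms(3), of r s] by simp
  qed
  have "\<forall>\<^sub>F r in at_top. r \<le> g r + r"
    using eventually_ge_at_top[of "0::real"]
    by eventually_elim (use assms(2,3) in \<open>auto dest: mono_onD[of _ g 0]\<close>)
  then show "filterlim (\<lambda>r. g r + r) at_top at_top"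
    by (rule filterlim_at_top_mono[OF filterlim_ident])
qed (use assms in simp)

lemma bdd_above_norm_image:
  "compact K \<Longrightarrow> continuous_on K F \<Longrightarrow> bdd_above ((\<lambda>z. norm (F z)) ` K)"
  by (metis bdd_above_norm compact_continuous_image compact_imp_bounded image_image)

(* The maximum of norm F on cball 0 r, with the radius as a scaling factor so that continuity
   in r reduces to uniform continuity of F on a fixed ball. *)
definition max_norm_cball :: "('a::real_normed_vector \<Rightarrow> 'b::real_normed_vector) \<Rightarrow> real \<Rightarrow> real" where
  "max_norm_cball F r = (SUP z\<in>cball 0 1. norm (F (r *\<^sub>R z)))"

lemma bdd_above_max_norm_cball:
  fixes F :: "'a::euclidean_space \<Rightarrow> 'b::real_normed_vector"
  assumes "continuous_on UNIV F"
  shows "bdd_above ((\<lambda>z. norm (F (r *\<^sub>R z))) ` cball 0 1)"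
  by (rule bdd_above_norm_image) (auto intro!: continuous_on_compose2[OF assms] continuous_intros)

lemma norm_le_max_norm_cball:
  fixes F :: "'a::euclidean_space \<Rightarrow> 'b::real_normed_vector"
  assumes "continuous_on UNIV F" and z: "norm z \<le> r"
  shows "norm (F z) \<le> max_norm_cball F r"
proof -
  have "z /\<^sub>R r \<in> cball 0 1"
  proof (cases "r = 0")
    case False
    with z have "r > 0" using norm_ge_zero[of z] by linarith
    then show ?thesis using z by (simp add: field_simps)
  qed (use z in simp)
  moreover have "F z = F (r *\<^sub>R (z /\<^sub>R r))"
    using z by (cases "r = 0") auto
  ultimately show ?thesis
    unfolding max_norm_cball_def by (metis cSUP_upper bdd_above_max_norm_cball[OF assms(1)])
qed

lemma mono_max_norm_cball:
  fixes F :: "'a::euclidean_space \<Rightarrow> 'b::real_normed_vector"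
  assumes "continuous_on UNIV F"
  shows "mono_on {0..} (max_norm_cball F)"
proof (rule mono_onI)
  fix a b :: real assume "a \<in> {0..}" "a \<le> b"
  then have "norm (a *\<^sub>R z) \<le> b" if "z \<in> cball 0 1" for z :: 'a
    using that mult_left_le[of "norm z" a] by auto
  then show "max_norm_cball F a \<le> max_norm_cball F b"
    unfolding max_norm_cball_def[of F a]
    by (intro cSUP_least norm_le_max_norm_cball[OF assms]) auto
qed

lemma continuous_max_norm_cball:
  fixes F :: "'a::euclidean_space \<Rightarrow> 'b::real_normed_vector"
  assumes F: "continuous_on UNIV F"
  shows "continuous_on UNIV (max_norm_cball F)"
  unfolding continuous_on_iff
proof (intro ballI allI impI)
  fix r0 e :: real assume "e > 0"
  define B where "B = cball (0::'a) (\<bar>r0\<bar> + 1)"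
  have "uniformly_continuous_on B F"
    unfolding B_def by (intro compact_uniformly_continuous continuous_on_subset[OF F]) auto
  then obtain d where "d > 0"
    and d: "\<And>z z'. z \<in> B \<Longrightarrow> z' \<in> B \<Longrightarrow> dist z' z < d \<Longrightarrow> dist (F z') (F z) < e/2"
    unfolding uniformly_continuous_on_def using \<open>e > 0\<close> by (meson half_gt_zero)
  have close: "max_norm_cball F r \<le> max_norm_cball F r' + e/2"
    if r: "\<bar>r - r0\<bar> < min (d/2) 1" and r': "\<bar>r' - r0\<bar> < min (d/2) 1" for r r'
    unfolding max_norm_cball_def[of F r]
  proof (rule cSUP_least)
    fix z :: 'a assume z: "z \<in> cball 0 1"
    have in_B: "s *\<^sub>R z \<in> B" if "\<bar>s - r0\<bar> < 1" for s
      using that z mult_left_le[of "norm z" "\<bar>s\<bar>"] by (auto simp: B_def)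
    have "dist (r' *\<^sub>R z) (r *\<^sub>R z) = \<bar>r' - r\<bar> * norm z"
      by (simp add: dist_norm flip: scaleR_diff_left)
    also have "\<dots> \<le> \<bar>r' - r\<bar>" using z mult_left_le[of "norm z" "\<bar>r' - r\<bar>"] by simp
    also have "\<dots> < d" using r r' by linarith
    finally have "dist (F (r' *\<^sub>R z)) (F (r *\<^sub>R z)) < e/2"
      by (rule d[rotated 2]) (use in_B r r' in simp_all)
    moreover have "norm (F (r *\<^sub>R z)) - norm (F (r' *\<^sub>R z)) \<le> dist (F (r' *\<^sub>R z)) (F (r *\<^sub>R z))"
      using norm_triangle_ineq2[of "F (r *\<^sub>R z)" "F (r' *\<^sub>R z)"]
      by (simp add: dist_norm norm_minus_commute)
    ultimately have "norm (F (r *\<^sub>R z)) \<le> norm (F (r' *\<^sub>R z)) + e/2" by linarith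
    also have "norm (F (r' *\<^sub>R z)) \<le> max_norm_cball F r'"
      unfolding max_norm_cball_def by (rule cSUP_upper[OF z bdd_above_max_norm_cball[OF F]])
    finally show "norm (F (r *\<^sub>R z)) \<le> max_norm_cball F r' + e/2" by simp
  qed simp
  show "\<exists>\<delta>>0. \<forall>r\<in>UNIV. dist r r0 < \<delta> \<longrightarrow> dist (max_norm_cball F r) (max_norm_cball F r0) < e"
  proof (intro exI[of _ "min (d/2) 1"] conjI ballI impI)
    fix r assume "dist r r0 < min (d/2) 1"
    then show "dist (max_norm_cball F r) (max_norm_cball F r0) < e"
      using close[of r r0] close[of r0 r] \<open>d > 0\<close> \<open>e > 0\<close> by (auto simp: dist_real_def)
  qed (use \<open>d > 0\<close> in auto)
qed

lemma class_K_inf_norm_majorant: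
  fixes F :: "'a::euclidean_space \<Rightarrow> 'b::real_normed_vector"
  assumes F: "continuous_on UNIV F" and "F 0 = 0"
  obtains \<rho> where "class_K_inf \<rho>" "\<And>z. norm (F z) \<le> \<rho> (norm z)"
proof
  show "class_K_inf (\<lambda>r. max_norm_cball F r + r)"
  proof (rule class_K_inf_add_id)
    show "continuous_on {0..} (max_norm_cball F)"
      using continuous_max_norm_cball[OF F] by (rule continuous_on_subset) simp
    show "max_norm_cball F 0 = 0" using \<open>F 0 = 0\<close> by (simp add: max_norm_cball_def)
  qed (rule mono_max_norm_cball[OF F])
  show "norm (F z) \<le> max_norm_cball F (norm z) + norm z" for z
    using norm_le_max_norm_cball[OF F, of z "norm z"] norm_ge_zero[of z] by linarith
qed

lemma integral_reparametrization:
  fixes G :: "real \<Rightarrow> real"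
  assumes "a \<le> b" and G: "continuous_on {a..b} G" and pos: "\<And>x. x \<in> {a..b} \<Longrightarrow> G x > 0"
  obtains S \<tau> where "S \<ge> 0" "\<tau> 0 = a" "\<tau> ` {0..S} = {a..b}" "continuous_on {0..S} \<tau>"
    "\<And>s. s \<in> {0..S} \<Longrightarrow> (\<tau> has_real_derivative inverse (G (\<tau> s))) (at s within {0..S})"
proof -
  define \<sigma> where "\<sigma> x = integral {a..x} G" for x
  have \<sigma>_deriv: "(\<sigma> has_real_derivative G x) (at x within {a..b})" if "x \<in> {a..b}" for x
    unfolding \<sigma>_def has_real_derivative_iff_has_vector_derivative
    by (rule integral_has_vector_derivative[OF G that])
  have \<sigma>_cont: "continuous_on {a..b} \<sigma>"
    using \<sigma>_deriv by (meson DERIV_continuous continuous_on_eq_continuous_within)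
  have \<sigma>_less: "\<sigma> x < \<sigma> y" if "a \<le> x" "x < y" "y \<le> b" for x y
  proof (rule DERIV_pos_imp_increasing_open[OF \<open>x < y\<close>])
    fix z assume "x < z" "z < y"
    then have "(\<sigma> has_real_derivative G z) (at z)"
      using \<sigma>_deriv[of z] that at_within_interior[of z "{a..b}"] by auto
    then show "\<exists>D. (\<sigma> has_real_derivative D) (at z) \<and> 0 < D"
      using pos[of z] \<open>x < z\<close> \<open>z < y\<close> that by auto
  qed (use that in \<open>auto intro: continuous_on_subset[OF \<sigma>_cont]\<close>)
  have inj: "inj_on \<sigma> {a..b}"
    by (rule inj_onI) (metis \<sigma>_less atLeastAtMost_iff linorder_neqE_linordered_idom order_less_irrefl)
  define S where "S = \<sigma> b"
  have \<sigma>_a: "\<sigma> a = 0" by (simp add: \<sigma>_def)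
  have \<sigma>_image: "\<sigma> ` {a..b} = {0..S}"
  proof
    show "\<sigma> ` {a..b} \<subseteq> {0..S}"
      using \<sigma>_less \<sigma>_a by (force simp: S_def le_less)
    show "{0..S} \<subseteq> \<sigma> ` {a..b}"
      using IVT'[of \<sigma> a _ b] \<sigma>_cont \<sigma>_a \<open>a \<le> b\<close> by (force simp: S_def)
  qed
  define \<tau> where "\<tau> = inv_into {a..b} \<sigma>"
  have \<tau>_\<sigma>: "\<tau> (\<sigma> x) = x" if "x \<in> {a..b}" for x
    unfolding \<tau>_def using inv_into_f_f[OF inj that] .
  have "\<tau> ` {0..S} = (\<lambda>x. \<tau> (\<sigma> x)) ` {a..b}"
    unfolding \<sigma>_image[symmetric] image_image ..
  also have "\<dots> = {a..b}"
    using image_cong[OF refl \<tau>_\<sigma>, of "{a..b}" "\<lambda>x. x"] by simp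
  finally have \<tau>_image: "\<tau> ` {0..S} = {a..b}" .
  have \<tau>_cont: "continuous_on {0..S} \<tau>"
    using continuous_on_inv[OF \<sigma>_cont compact_Icc, of \<tau>] \<tau>_\<sigma> \<sigma>_image by simp
  show thesis
  proof
    have "\<sigma> a \<in> \<sigma> ` {a..b}" using \<open>a \<le> b\<close> by simp
    then show "S \<ge> 0" using \<sigma>_image \<sigma>_a by simp
    show "\<tau> 0 = a" using \<tau>_\<sigma>[of a] \<sigma>_a \<open>a \<le> b\<close> by simp
    fix s assume s: "s \<in> {0..S}"
    then obtain x where x: "x \<in> {a..b}" "s = \<sigma> x" using \<sigma>_image by blast
    have "(\<tau> has_derivative (*) (inverse (G x))) (at (\<sigma> x) within \<sigma> ` {a..b})"
    proof (rule has_derivative_inverse_within)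
      show "(\<sigma> has_derivative (*) (G x)) (at x within {a..b})"
        using \<sigma>_deriv[OF x(1)] by (simp add: has_field_derivative_def)
      show "continuous (at (\<sigma> x) within \<sigma> ` {a..b}) \<tau>"
        using \<tau>_cont s x \<sigma>_image by (simp add: continuous_on_eq_continuous_within)
      show "(*) (inverse (G x)) \<circ> (*) (G x) = id"
        using pos[OF x(1)] by (auto simp: fun_eq_iff)
    qed (use x \<tau>_\<sigma> in \<open>auto intro: linear_cmul linear_ident\<close>)
    then show "(\<tau> has_real_derivative inverse (G (\<tau> s))) (at s within {0..S})"
      using x \<tau>_\<sigma> \<sigma>_image by (simp add: has_field_derivative_def)
  qed (use \<tau>_image \<tau>_cont in auto)
qed

lemma ode_solution_continue:
  fixes F :: "'a::euclidean_space \<Rightarrow> real \<Rightarrow> 'a"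
  assumes "S \<ge> 0"
    and q: "\<And>s. s \<in> {0..S} \<Longrightarrow> (q has_vector_derivative F (q s) (\<omega> s)) (at s within {0..S})"
    and Y: "ode_solution F (\<lambda>_. \<omega> S) Y" "Y 0 = q S"
  shows "ode_solution F (\<lambda>s. \<omega> (min s S)) (\<lambda>s. if s \<in> {0..S} then q s else Y (s - S))"
  unfolding ode_solution_def
proof (intro allI impI)
  fix s :: real assume "s \<ge> 0"
  have shift: "(\<lambda>s. s - S) ` {S..} = {0..}"
    by (auto simp: image_iff intro!: bexI[of _ "_ + S"])
  have Y_shift: "((\<lambda>s. Y (s - S)) has_vector_derivative F (Y (s - S)) (\<omega> S)) (at s within {S..})"
    if "s \<ge> S" for s
  proof -
    have "((Y \<circ> (\<lambda>s. s - S)) has_vector_derivative 1 *\<^sub>R F (Y (s - S)) (\<omega> S)) (at s within {S..})"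
      by (rule vector_diff_chain_within)
        (use Y(1) that shift in \<open>auto simp: ode_solution_def intro!: derivative_eq_intros\<close>)
    then show ?thesis by (simp add: o_def)
  qed
  have "((\<lambda>s. if s \<in> {0..S} then q s else Y (s - S)) has_vector_derivative
      (if s \<in> {0..S} then F (q s) (\<omega> s) else F (Y (s - S)) (\<omega> S))) (at s within {0..})"
  proof (rule has_vector_derivative_If_within_closures[where T = "{S<..}"])
    have closures: "closure {0..S} \<inter> closure {S<..} = {S}" using \<open>S \<ge> 0\<close> by auto
    show "s \<in> {0..S} \<union> {S<..}" "{0..} = {0..S} \<union> {S<..}" using \<open>s \<ge> 0\<close> \<open>S \<ge> 0\<close> by auto
    show "(q has_vector_derivative F (q s) (\<omega> s)) (at s within {0..S} \<union> (closure {0..S} \<inter> closure {S<..}))"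
      if "s \<in> {0..S} \<union> (closure {0..S} \<inter> closure {S<..})"
      using q that \<open>S \<ge> 0\<close> by (simp add: closures insert_absorb)
    show "((\<lambda>s. Y (s - S)) has_vector_derivative F (Y (s - S)) (\<omega> S))
        (at s within {S<..} \<union> (closure {0..S} \<inter> closure {S<..}))"
      if "s \<in> {S<..} \<union> (closure {0..S} \<inter> closure {S<..})"
    proof -
      have "{S<..} \<union> (closure {0..S} \<inter> closure {S<..}) = {S..}" using closures by auto
      then show ?thesis using Y_shift that by auto
    qed
  qed (use Y(2) \<open>S \<ge> 0\<close> in auto)
  then show "((\<lambda>s. if s \<in> {0..S} then q s else Y (s - S)) has_vector_derivative
      F (if s \<in> {0..S} then q s else Y (s - S)) (\<omega> (min s S))) (at s within {0..})"
    using \<open>s \<ge> 0\<close> by (cases "s \<le> S") (auto simp: min_def)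
qed

lemma ode_solution_through_reparametrized_curve:
  fixes F :: "'a::euclidean_space \<Rightarrow> real \<Rightarrow> 'a" and P :: "real \<Rightarrow> 'a" and G w :: "real \<Rightarrow> real"
  assumes exists: "\<And>x0 \<omega>. continuous_on {0..} \<omega> \<Longrightarrow> \<exists>Y. ode_solution F \<omega> Y \<and> Y 0 = x0"
    and "a \<le> b" and G: "continuous_on {a..b} G" "\<And>x. x \<in> {a..b} \<Longrightarrow> G x > 0"
    and w: "continuous_on {a..b} w"
    and P: "\<And>x. x \<in> {a..b} \<Longrightarrow> (P has_vector_derivative G x *\<^sub>R F (P x) (w x)) (at x within {a..b})"
  obtains S \<tau> Z where "S \<ge> 0" "\<tau> 0 = a" "\<tau> ` {0..S} = {a..b}"
    "continuous_on {0..} (\<lambda>s. w (\<tau> (min s S)))" "ode_solution F (\<lambda>s. w (\<tau> (min s S))) Z"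
    "\<And>s. s \<in> {0..S} \<Longrightarrow> Z s = P (\<tau> s)"
proof -
  obtain S \<tau> where "S \<ge> 0" "\<tau> 0 = a" and \<tau>_image: "\<tau> ` {0..S} = {a..b}"
    and \<tau>_cont: "continuous_on {0..S} \<tau>"
    and \<tau>_deriv: "\<And>s. s \<in> {0..S} \<Longrightarrow> (\<tau> has_real_derivative inverse (G (\<tau> s))) (at s within {0..S})"
    using integral_reparametrization[OF \<open>a \<le> b\<close> G] by blast
  have \<tau>_in: "\<tau> s \<in> {a..b}" if "s \<in> {0..S}" for s using \<tau>_image that by blast
  have q_deriv: "((\<lambda>s. P (\<tau> s)) has_vector_derivative F (P (\<tau> s)) (w (\<tau> s))) (at s within {0..S})"
    if s: "s \<in> {0..S}" for s
  proof -
    have "((P \<circ> \<tau>) has_vector_derivative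
        inverse (G (\<tau> s)) *\<^sub>R (G (\<tau> s) *\<^sub>R F (P (\<tau> s)) (w (\<tau> s)))) (at s within {0..S})"
      by (rule vector_diff_chain_within)
        (use \<tau>_deriv[OF s] P[OF \<tau>_in[OF s]] \<tau>_image
          in \<open>auto simp: has_real_derivative_iff_has_vector_derivative\<close>)
    then show ?thesis using G(2)[OF \<tau>_in[OF s]] by (simp add: o_def)
  qed
  have "continuous_on {0..S} (\<lambda>s. w (\<tau> s))"
    by (rule continuous_on_compose2[OF w \<tau>_cont]) (use \<tau>_in in auto)
  then have \<Omega>_cont: "continuous_on {0..} (\<lambda>s. w (\<tau> (min s S)))"
    by (rule continuous_on_compose2) (auto intro!: continuous_intros simp: \<open>S \<ge> 0\<close>)
  obtain Y where "ode_solution F (\<lambda>_. w (\<tau> S)) Y" "Y 0 = P (\<tau> S)"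
    using exists[of "\<lambda>_. w (\<tau> S)"] by auto
  then have "ode_solution F (\<lambda>s. w (\<tau> (min s S))) (\<lambda>s. if s \<in> {0..S} then P (\<tau> s) else Y (s - S))"
    using ode_solution_continue[OF \<open>S \<ge> 0\<close>, of "\<lambda>s. P (\<tau> s)" F "\<lambda>s. w (\<tau> s)"] q_deriv
    by blast
  with \<open>S \<ge> 0\<close> \<open>\<tau> 0 = a\<close> \<tau>_image \<Omega>_cont show thesis by (rule that) simp
qed

lemma ISS_bound_along_reparametrization:
  fixes F :: "'a::euclidean_space \<Rightarrow> real \<Rightarrow> 'a" and P :: "real \<Rightarrow> 'a" and G w :: "real \<Rightarrow> real"
  assumes exists: "\<And>x0 \<omega>. continuous_on {0..} \<omega> \<Longrightarrow> \<exists>Y. ode_solution F \<omega> Y \<and> Y 0 = x0"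
    and estimate: "\<And>\<omega> Y t. continuous_on {0..} \<omega> \<Longrightarrow> ode_solution F \<omega> Y \<Longrightarrow> t \<ge> 0 \<Longrightarrow>
        norm (Y t) \<le> \<beta> (norm (Y 0)) t + \<gamma> (SUP s\<in>{0..t}. \<bar>\<omega> s\<bar>)"
    and \<beta>: "class_KL \<beta>" and \<gamma>: "class_K \<gamma>"
    and "a \<le> b" and G: "continuous_on {a..b} G" "\<And>x. x \<in> {a..b} \<Longrightarrow> G x > 0"
    and w: "continuous_on {a..b} w"
    and P: "\<And>x. x \<in> {a..b} \<Longrightarrow> (P has_vector_derivative G x *\<^sub>R F (P x) (w x)) (at x within {a..b})"
    and x: "x \<in> {a..b}"
  shows "norm (P x) \<le> \<beta> (norm (P a)) 0 + \<gamma> (SUP y\<in>{a..b}. \<bar>w y\<bar>)"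
proof -
  obtain S \<tau> Z where "S \<ge> 0" "\<tau> 0 = a" and \<tau>_image: "\<tau> ` {0..S} = {a..b}"
    and \<Omega>_cont: "continuous_on {0..} (\<lambda>s. w (\<tau> (min s S)))"
    and Z: "ode_solution F (\<lambda>s. w (\<tau> (min s S))) Z" and Z_eq: "\<And>s. s \<in> {0..S} \<Longrightarrow> Z s = P (\<tau> s)"
    using ode_solution_through_reparametrized_curve[OF exists \<open>a \<le> b\<close> G w P] by blast
  define \<Omega> where "\<Omega> s = w (\<tau> (min s S))" for s
  obtain s where s: "s \<in> {0..S}" "\<tau> s = x" using x \<tau>_image by (metis imageE)
  have "norm (P x) \<le> \<beta> (norm (P a)) s + \<gamma> (SUP r\<in>{0..s}. \<bar>\<Omega> r\<bar>)"
    using estimate[OF \<Omega>_cont Z, of s] Z_eq[of s] Z_eq[of 0] s \<open>\<tau> 0 = a\<close> \<open>S \<ge> 0\<close>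
    by (simp add: \<Omega>_def)
  also have "\<beta> (norm (P a)) s \<le> \<beta> (norm (P a)) 0"
    using \<beta> s unfolding class_KL_def monotone_on_def by auto
  also have "\<gamma> (SUP r\<in>{0..s}. \<bar>\<Omega> r\<bar>) \<le> \<gamma> (SUP y\<in>{a..b}. \<bar>w y\<bar>)"
  proof (rule class_K_mono[OF \<gamma>])
    have bdd: "bdd_above ((\<lambda>y. \<bar>w y\<bar>) ` {a..b})"
      using bdd_above_norm_image[OF compact_Icc w] by simp
    have \<Omega>_le: "\<bar>\<Omega> r\<bar> \<le> (SUP y\<in>{a..b}. \<bar>w y\<bar>)" if "r \<in> {0..s}" for r
      unfolding \<Omega>_def by (rule cSUP_upper[OF _ bdd]) (use that s \<tau>_image in auto)
    have "\<bar>\<Omega> 0\<bar> \<le> (SUP r\<in>{0..s}. \<bar>\<Omega> r\<bar>)"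
      using s \<Omega>_le by (intro cSUP_upper bdd_aboveI2) auto
    then show "0 \<le> (SUP r\<in>{0..s}. \<bar>\<Omega> r\<bar>)" by linarith
    show "(SUP r\<in>{0..s}. \<bar>\<Omega> r\<bar>) \<le> (SUP y\<in>{a..b}. \<bar>w y\<bar>)"
      using s \<Omega>_le by (intro cSUP_least) auto
  qed
  finally show ?thesis by simp
qed

lemma Gamma_bounds:
  assumes v: "v u \<ge> v_low" "v_low > 0" and "M \<ge> 0"
    and speed: "- M < v' u * ux / v u" "v' u * ux / v u < 1" and x: "x \<in> {0..1}"
  shows "0 < Gamma v v' u ux x" "Gamma v v' u ux x \<le> (1 + M) / v_low"
proof -
  define k where "k = v' u * ux / v u"
  have "v u > 0" using v by linarith
  then have Gamma_eq: "Gamma v v' u ux x = (1 - x * k) / v u"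
    by (simp add: Gamma_def k_def field_simps power2_eq_square)
  have x01: "0 \<le> x" "x \<le> 1" using x by auto
  have "x * k < 1"
  proof (cases "k \<le> 0")
    case True then show ?thesis using mult_nonneg_nonpos[OF x01(1) True] by linarith
  next
    case False then have "x * k \<le> 1 * k" by (intro mult_right_mono x01) simp
    then show ?thesis using speed(2) by (simp add: k_def)
  qed
  then show "0 < Gamma v v' u ux x" using \<open>v u > 0\<close> by (simp add: Gamma_eq)
  have "- M \<le> x * k"
  proof (cases "k \<ge> 0")
    case True then show ?thesis using mult_nonneg_nonneg[OF x01(1) True] \<open>M \<ge> 0\<close> by linarith
  next
    case False then have "1 * k \<le> x * k" by (intro mult_right_mono_neg x01) simp
    then show ?thesis using speed(1) by (simp add: k_def)
  qed
  then have "(1 - x * k) / v u \<le> (1 + M) / v u" using \<open>v u > 0\<close> by (simp add: divide_right_mono)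
  also have "\<dots> \<le> (1 + M) / v_low" using v \<open>M \<ge> 0\<close> by (intro divide_left_mono) auto
  finally show "Gamma v v' u ux x \<le> (1 + M) / v_low" by (simp add: Gamma_eq)
qed

lemma closed_loop_solution_slice_continuous:
  assumes sol: "closed_loop_solution f v v' \<kappa> X u ux ut p" and "t \<ge> 0"
  shows "continuous_on {0..1} (\<lambda>y. u y t)" "continuous_on {0..1} (\<lambda>y. ux y t)"
    "continuous_on {0..1} (\<lambda>y. p y t)"
proof -
  note sol_def = sol[unfolded closed_loop_solution_def]
  have slice: "(\<lambda>y. (y, t)) ` {0..1} \<subseteq> {0..1} \<times> {0..}" using \<open>t \<ge> 0\<close> by auto
  have "continuous_on ({0..1} \<times> {0..}) (\<lambda>(y, s). u y s)"
    unfolding continuous_on_eq_continuous_within using sol_def has_derivative_continuous by fastforce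
  from continuous_on_compose2[OF this _ slice]
  show "continuous_on {0..1} (\<lambda>y. u y t)" by (simp add: continuous_intros)
  from continuous_on_compose2[OF sol_def[THEN conjunct2, THEN conjunct1] _ slice]
  show "continuous_on {0..1} (\<lambda>y. ux y t)" by (simp add: continuous_intros)
  show "continuous_on {0..1} (\<lambda>y. p y t)" using sol_def \<open>t \<ge> 0\<close> by blast
qed

locale closed_loop_gains =
  fixes f :: "'a::euclidean_space \<Rightarrow> real \<Rightarrow> 'a" and \<kappa> :: "'a \<Rightarrow> real"
    and v v' :: "real \<Rightarrow> real" and v_low M :: real
    and \<rho>f \<rho>k \<gamma> :: "real \<Rightarrow> real" and \<beta> :: "real \<Rightarrow> real \<Rightarrow> real"
  assumes f_cont: "continuous_on UNIV (\<lambda>z. f (fst z) (snd z))"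
    and f_bound: "\<And>X \<omega>. norm (f X \<omega>) \<le> \<rho>f (norm (X, \<omega>))" and \<rho>f: "class_K \<rho>f"
    and \<kappa>_cont: "continuous_on UNIV \<kappa>"
    and \<kappa>_bound: "\<And>X. \<bar>\<kappa> X\<bar> \<le> \<rho>k (norm X)" and \<rho>k: "class_K \<rho>k"
    and v_cont: "continuous_on UNIV v" and v'_cont: "continuous_on UNIV v'"
    and v_lower: "\<And>s. v s \<ge> v_low" and v_low_pos: "v_low > 0" and M_nonneg: "M \<ge> 0"
    and ISS_exists: "\<And>x0 \<omega>. continuous_on {0..} \<omega> \<Longrightarrow>
        \<exists>Y. ode_solution (\<lambda>X \<omega>. f X (\<kappa> X + \<omega>)) \<omega> Y \<and> Y 0 = x0"
    and ISS_estimate: "\<And>\<omega> Y t. continuous_on {0..} \<omega> \<Longrightarrow>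
        ode_solution (\<lambda>X \<omega>. f X (\<kappa> X + \<omega>)) \<omega> Y \<Longrightarrow> t \<ge> 0 \<Longrightarrow>
        norm (Y t) \<le> \<beta> (norm (Y 0)) t + \<gamma> (SUP s\<in>{0..t}. \<bar>\<omega> s\<bar>)"
    and \<beta>: "class_KL \<beta>" and \<gamma>: "class_K \<gamma>"
begin

context
  fixes X :: "real \<Rightarrow> 'a" and u ux ut :: "real \<Rightarrow> real \<Rightarrow> real" and p :: "real \<Rightarrow> real \<Rightarrow> 'a"
    and t :: real
  assumes sol: "closed_loop_solution f v v' \<kappa> X u ux ut p" and "t \<ge> 0"
begin

lemma slice_Gamma_continuous: "continuous_on {0..1} (\<lambda>y. Gamma v v' (u y t) (ux y t) y)"
proof -
  have "v s \<noteq> 0" for s using v_lower[of s] v_low_pos by auto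
  then show ?thesis
    unfolding Gamma_def
    using closed_loop_solution_slice_continuous[OF sol \<open>t \<ge> 0\<close>]
      continuous_on_compose2[OF v_cont] continuous_on_compose2[OF v'_cont]
    by (auto intro!: continuous_intros)
qed

lemma slice_has_derivative:
  assumes "x \<in> {0..1}"
  shows "((\<lambda>y. p y t) has_vector_derivative Gamma v v' (u x t) (ux x t) x *\<^sub>R f (p x t) (u x t))
    (at x within {0..1})"
proof -
  define g where "g y = Gamma v v' (u y t) (ux y t) y *\<^sub>R f (p y t) (u y t)" for y
  have p_integral: "\<forall>y\<in>{0..1}. \<forall>t\<ge>0. p y t = X t +
      integral {0..y} (\<lambda>z. Gamma v v' (u z t) (ux z t) z *\<^sub>R f (p z t) (u z t))"
    using sol unfolding closed_loop_solution_def by (elim conjE)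
  have "continuous_on {0..1} (\<lambda>y. (p y t, u y t))"
    using closed_loop_solution_slice_continuous[OF sol \<open>t \<ge> 0\<close>] by (intro continuous_intros)
  from continuous_on_compose2[OF f_cont this subset_UNIV]
  have "continuous_on {0..1} (\<lambda>y. f (p y t) (u y t))" by simp
  then have "continuous_on {0..1} g"
    unfolding g_def by (intro continuous_intros slice_Gamma_continuous)
  from integral_has_vector_derivative[OF this assms]
  have deriv: "((\<lambda>y. X t + integral {0..y} g) has_vector_derivative g x) (at x within {0..1})"
    by (auto intro!: derivative_eq_intros)
  have p_eq: "p y t = X t + integral {0..y} g" if "y \<in> {0..1}" for y
    unfolding g_def[abs_def] by (rule p_integral[rule_format, OF that \<open>t \<ge> 0\<close>])
  have "((\<lambda>y. p y t) has_vector_derivative g x) (at x within {0..1})"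
    by (rule has_vector_derivative_transform[OF assms p_eq deriv])
  then show ?thesis by (simp add: g_def)
qed

lemma slice_at_zero: "p 0 t = X t"
  using sol \<open>t \<ge> 0\<close> unfolding closed_loop_solution_def by force

lemma slice_error_continuous: "continuous_on {0..1} (\<lambda>y. u y t - \<kappa> (p y t))"
  using closed_loop_solution_slice_continuous[OF sol \<open>t \<ge> 0\<close>]
    continuous_on_compose2[OF \<kappa>_cont, of "{0..1}" "\<lambda>y. p y t"]
  by (auto intro!: continuous_intros)

context
  assumes speed: "\<forall>x\<in>{0..1}. - M < v' (u x t) * ux x t / v (u x t) \<and> v' (u x t) * ux x t / v (u x t) < 1"
begin

lemma slice_Gamma_bounds:
  assumes "x \<in> {0..1}"
  shows "0 < Gamma v v' (u x t) (ux x t) x" "Gamma v v' (u x t) (ux x t) x \<le> (1 + M) / v_low"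
  using Gamma_bounds[where v = v and u = "u x t" and v' = v' and ux = "ux x t",
      OF v_lower v_low_pos M_nonneg _ _ assms] speed assms by auto

lemma slice_state_bound:
  assumes "x \<in> {0..1}"
  shows "norm (p x t) \<le> \<beta> (norm (X t)) 0 + \<gamma> (SUP y\<in>{0..1}. \<bar>u y t - \<kappa> (p y t)\<bar>)"
proof -
  have "norm (p x t) \<le> \<beta> (norm (p 0 t)) 0 + \<gamma> (SUP y\<in>{0..1}. \<bar>u y t - \<kappa> (p y t)\<bar>)"
  proof (rule ISS_bound_along_reparametrization[OF ISS_exists ISS_estimate \<beta> \<gamma> _
        slice_Gamma_continuous _ slice_error_continuous _ assms])
    show "((\<lambda>y. p y t) has_vector_derivative Gamma v v' (u y t) (ux y t) y *\<^sub>R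
        f (p y t) (\<kappa> (p y t) + (u y t - \<kappa> (p y t)))) (at y within {0..1})" if "y \<in> {0..1}" for y
      using slice_has_derivative[OF that] by simp
  qed (use slice_Gamma_bounds in auto)
  then show ?thesis by (simp add: slice_at_zero)
qed

lemma slice_gradient_bound:
  assumes x: "x \<in> {0..1}" and B: "norm (p x t) \<le> B" and W: "\<bar>u x t - \<kappa> (p x t)\<bar> \<le> W"
  shows "norm (vector_derivative (\<lambda>y. p y t) (at x within {0..1})) \<le> (1 + M) / v_low * \<rho>f (B + \<rho>k B + W)"
proof -
  define G where "G = Gamma v v' (u x t) (ux x t) x"
  have "vector_derivative (\<lambda>y. p y t) (at x within {0..1}) = G *\<^sub>R f (p x t) (u x t)"
    using vector_derivative_within_cbox[OF _ _ slice_has_derivative[OF x, folded cbox_interval]] x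
    by (simp add: cbox_interval G_def)
  moreover have "\<bar>u x t\<bar> \<le> \<rho>k B + W"
    using \<kappa>_bound[of "p x t"] class_K_mono[OF \<rho>k norm_ge_zero B] W by linarith
  then have "norm (p x t, u x t) \<le> B + \<rho>k B + W"
    using norm_Pair_le[of "p x t" "u x t"] B by simp
  then have f_le: "norm (f (p x t) (u x t)) \<le> \<rho>f (B + \<rho>k B + W)"
    using f_bound[of "p x t" "u x t"] class_K_mono[OF \<rho>f norm_ge_zero] by (meson order_trans)
  have "G * norm (f (p x t) (u x t)) \<le> (1 + M) / v_low * \<rho>f (B + \<rho>k B + W)"
    using slice_Gamma_bounds[OF x, folded G_def] f_le order_trans[OF norm_ge_zero f_le]
    by (intro mult_mono) auto
  ultimately show ?thesis using slice_Gamma_bounds(1)[OF x, folded G_def] by simp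
qed

end

end

definition state_gain :: "real \<Rightarrow> real" where
  "state_gain r = \<beta> r 0 + \<gamma> r"

definition closed_loop_gain :: "real \<Rightarrow> real" where
  "closed_loop_gain r =
     state_gain r + (1 + M) / v_low * \<rho>f (state_gain r + \<rho>k (state_gain r) + r) + r"

lemma class_K_initial_gain: "class_K (\<lambda>r. \<beta> r 0)"
  using \<beta> by (simp add: class_KL_def)

lemma class_K_state_gain: "class_K state_gain"
  unfolding state_gain_def[abs_def] by (rule class_K_add[OF class_K_initial_gain \<gamma>])

lemma class_K_inf_closed_loop_gain: "class_K_inf closed_loop_gain"
proof -
  have "(1 + M) / v_low > 0" using M_nonneg v_low_pos by simp
  then have "class_K (\<lambda>r. state_gain r + (1 + M) / v_low * \<rho>f (state_gain r + \<rho>k (state_gain r) + r))"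
    by (intro class_K_add class_K_scale class_K_comp[OF \<rho>f] class_K_comp[OF \<rho>k]
        class_K_state_gain class_K_id)
  then show ?thesis
    unfolding closed_loop_gain_def
    by (intro class_K_inf_add_id class_K_mono_on) (auto simp: class_K_def)
qed

lemma closed_loop_gain_bound:
  assumes sol: "closed_loop_solution f v v' \<kappa> X u ux ut p" and t: "t \<ge> 0"
    and speed: "\<forall>x\<in>{0..1}. - M < v' (u x t) * ux x t / v (u x t) \<and> v' (u x t) * ux x t / v (u x t) < 1"
  shows "(SUP x\<in>{0..1}. norm (p x t))
      + (SUP x\<in>{0..1}. norm (vector_derivative (\<lambda>y. p y t) (at x within {0..1})))
    \<le> closed_loop_gain (norm (X t) + (SUP x\<in>{0..1}. \<bar>u x t - \<kappa> (p x t)\<bar>))"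
proof -
  define W where "W = (SUP x\<in>{0..1}. \<bar>u x t - \<kappa> (p x t)\<bar>)"
  define r where "r = norm (X t) + W"
  define B where "B = state_gain r"
  have "bdd_above ((\<lambda>x. \<bar>u x t - \<kappa> (p x t)\<bar>) ` {0..1})"
    using bdd_above_norm_image[OF compact_Icc slice_error_continuous[OF sol t]] by simp
  then have W: "\<bar>u x t - \<kappa> (p x t)\<bar> \<le> W" if "x \<in> {0..1}" for x
    unfolding W_def using that by (rule cSUP_upper[rotated])
  have "\<bar>u 0 t - \<kappa> (p 0 t)\<bar> \<le> W" by (rule W) simp
  then have "0 \<le> W" using abs_ge_zero[of "u 0 t - \<kappa> (p 0 t)"] by linarith
  then have r: "0 \<le> r" "W \<le> r" by (simp_all add: r_def)
  have p_le: "norm (p x t) \<le> B" if x: "x \<in> {0..1}" for x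
  proof -
    from class_K_mono[OF class_K_initial_gain norm_ge_zero, of "norm (X t)" r]
    have "\<beta> (norm (X t)) 0 + \<gamma> W \<le> B"
      unfolding B_def state_gain_def
      using class_K_mono[OF \<gamma> \<open>0 \<le> W\<close> r(2)] \<open>0 \<le> W\<close> by (simp add: r_def)
    then show ?thesis using slice_state_bound[OF sol t speed x] by (simp add: W_def)
  qed
  have "0 \<le> B" unfolding B_def by (rule class_K_nonneg[OF class_K_state_gain r(1)])
  then have inner: "0 \<le> B + \<rho>k B + W" "B + \<rho>k B + W \<le> B + \<rho>k B + r"
    using class_K_nonneg[OF \<rho>k] \<open>0 \<le> W\<close> r by auto
  have px_le: "norm (vector_derivative (\<lambda>y. p y t) (at x within {0..1}))
      \<le> (1 + M) / v_low * \<rho>f (B + \<rho>k B + r)" if x: "x \<in> {0..1}" for x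
  proof -
    have "norm (vector_derivative (\<lambda>y. p y t) (at x within {0..1}))
        \<le> (1 + M) / v_low * \<rho>f (B + \<rho>k B + W)"
      by (rule slice_gradient_bound[OF sol t speed x p_le[OF x] W[OF x]])
    also have "\<dots> \<le> (1 + M) / v_low * \<rho>f (B + \<rho>k B + r)"
      using class_K_mono[OF \<rho>f inner] M_nonneg v_low_pos by (intro mult_left_mono) auto
    finally show ?thesis .
  qed
  have "(SUP x\<in>{0..1}. norm (p x t)) \<le> B"
    by (rule cSUP_least) (use p_le in auto)
  moreover have "(SUP x\<in>{0..1}. norm (vector_derivative (\<lambda>y. p y t) (at x within {0..1})))
      \<le> (1 + M) / v_low * \<rho>f (B + \<rho>k B + r)"
    by (rule cSUP_least) (use px_le in auto)
  moreover have "closed_loop_gain r = B + (1 + M) / v_low * \<rho>f (B + \<rho>k B + r) + r"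
    by (simp add: closed_loop_gain_def B_def)
  ultimately show ?thesis using r(1) unfolding W_def[symmetric] r_def[symmetric] by linarith
qed

end

theorem lemma4:
  fixes f :: "'a::euclidean_space \<Rightarrow> real \<Rightarrow> 'a"
    and f' :: "'a \<times> real \<Rightarrow> ('a \<times> real) \<Rightarrow>\<^sub>L 'a"
    and v v' v'' :: "real \<Rightarrow> real"
    and \<kappa> :: "'a \<Rightarrow> real"
    and \<kappa>' :: "'a \<Rightarrow> 'a \<Rightarrow>\<^sub>L real"
    and \<kappa>'' :: "'a \<Rightarrow> 'a \<Rightarrow>\<^sub>L ('a \<Rightarrow>\<^sub>L real)"
    and v_low M :: real
  assumes f_C1: "\<And>z. ((\<lambda>(X,w). f X w) has_derivative blinfun_apply (f' z)) (at z)"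
    and f'_cont: "continuous_on UNIV f'"
    and f_zero: "f 0 0 = 0"
    and v_deriv: "\<And>s. (v has_real_derivative v' s) (at s)"
    and v'_deriv: "\<And>s. (v' has_real_derivative v'' s) (at s)"
    and v''_cont: "continuous_on UNIV v''"
    and v_low_pos: "v_low > 0"
    and v_lower: "\<And>s. v s \<ge> v_low"
    and A2: "strongly_forward_complete f"
    and \<kappa>_deriv: "\<And>X. (\<kappa> has_derivative blinfun_apply (\<kappa>' X)) (at X)"
    and \<kappa>'_deriv: "\<And>X. (\<kappa>' has_derivative blinfun_apply (\<kappa>'' X)) (at X)"
    and \<kappa>''_cont: "continuous_on UNIV \<kappa>''"
    and \<kappa>_zero: "\<kappa> 0 = 0"
    and A3: "ISS (\<lambda>X \<omega>. f X (\<kappa> X + \<omega>))"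
    and M_pos: "M > 0"
  shows "\<exists>\<rho>2. class_K_inf \<rho>2 \<and>
    (\<forall>X u ux ut p. closed_loop_solution f v v' \<kappa> X u ux ut p \<longrightarrow>
       (\<forall>x\<in>{0..1}. \<forall>t\<ge>0. - M < v' (u x t) * ux x t / v (u x t) \<and>
                             v' (u x t) * ux x t / v (u x t) < 1) \<longrightarrow>
       (\<forall>t\<ge>0.
          (SUP x\<in>{0..1}. norm (p x t))
          + (SUP x\<in>{0..1}. norm (vector_derivative (\<lambda>y. p y t) (at x within {0..1})))
          \<le> \<rho>2 (norm (X t) + (SUP x\<in>{0..1}. \<bar>u x t - \<kappa> (p x t)\<bar>))))"
proof -
  (* Only continuity of f, v, v' and \<kappa> enters the estimate. *)
  have f_cont: "continuous_on UNIV (\<lambda>z::'a \<times> real. f (fst z) (snd z))"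
    using has_derivative_continuous[OF f_C1]
    by (simp add: continuous_on_eq_continuous_at case_prod_beta')
  obtain \<rho>f where \<rho>f: "class_K_inf \<rho>f" "\<And>z. norm (f (fst z) (snd z)) \<le> \<rho>f (norm z)"
    using class_K_inf_norm_majorant[OF f_cont] f_zero by auto
  have \<kappa>_cont: "continuous_on UNIV \<kappa>"
    by (intro continuous_at_imp_continuous_on ballI has_derivative_continuous[OF \<kappa>_deriv])
  obtain \<rho>k where \<rho>k: "class_K_inf \<rho>k" "\<And>X. \<bar>\<kappa> X\<bar> \<le> \<rho>k (norm X)"
    using class_K_inf_norm_majorant[OF \<kappa>_cont] \<kappa>_zero by auto
  obtain \<beta> \<gamma> where ISS_gains: "class_KL \<beta>" "class_K \<gamma>"
    "\<And>\<omega> Y t. continuous_on {0..} \<omega> \<Longrightarrow> ode_solution (\<lambda>X \<omega>. f X (\<kappa> X + \<omega>)) \<omega> Y \<Longrightarrow> t \<ge> 0 \<Longrightarrow>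
       norm (Y t) \<le> \<beta> (norm (Y 0)) t + \<gamma> (SUP s\<in>{0..t}. \<bar>\<omega> s\<bar>)"
    using A3 unfolding ISS_def by blast
  interpret closed_loop_gains f \<kappa> v v' v_low M \<rho>f \<rho>k \<gamma> \<beta>
  proof
    show "continuous_on UNIV v" "continuous_on UNIV v'"
      using v_deriv v'_deriv by (meson DERIV_isCont continuous_at_imp_continuous_on)+
    show "norm (f X \<omega>) \<le> \<rho>f (norm (X, \<omega>))" for X \<omega> using \<rho>f(2)[of "(X, \<omega>)"] by simp
  qed (use f_cont \<kappa>_cont \<rho>f \<rho>k v_lower v_low_pos M_pos A3 ISS_gains in
      \<open>auto simp: class_K_inf_def ISS_def\<close>)
  show ?thesis
    using class_K_inf_closed_loop_gain closed_loop_gain_bound by blast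
qed

end
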